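(* Let $S\subseteq[12]$ be such that $\mathsf{MAIS}(G^*_S)<\alpha(G^*_{S,u})$. Then $\beta^*_{\mathcal{B}^*_S}(1)\ge\bar{\chi}(G^*_{S,u})$.
   Context: Index coding model. A unicast index coding problem has receivers $u_1,\dots,u_n$ and messages $\mathbf{x}_j$, each a vector in $\mathcal{A}^m$ for a finite alphabet $\mathcal{A}$ and positive integer $m$ (all messages have the same length). Receiver $u_i$ demands $\mathbf{x}_j$, $j\in W_i$, and knows $\mathbf{x}_j$, $j\in K_i$, with $W_i\cap K_i=\emptyset$, the $W_i$ pairwise disjoint and every message demanded by exactly one receiver. An index code consists of an encoder mapping the messages to a codeword $\mathbf{c}\in\mathcal{A}^\ell$, subsets $R_i\subseteq[\ell]$ (receiver $u_i$ observes only $\mathbf{c}_{R_i}$), and decoders at each $u_i$ mapping $(\mathbf{c}_{R_i},\mathbf{x}_{K_i})$ to $\mathbf{x}_{W_i}$; it is valid if every receiver decodes correctly for all message values. Broadcast rate is $\ell/m$; locality at $u_i$ is $|R_i|/(m|W_i|)$ and the locality of the code is the maximum over receivers (receivers with no demand impose no constraint). $\beta^*_{\mathcal{B}}(r)$ is the infimum of broadcast rates of valid index codes for $\mathcal{B}$, over all $m\ge1$, with locality at most $r$. The problem $\mathcal{B}^*$ has three receivers and 12 messages with $W_1=\{1,2,3,4\}$, $W_2=\{5,6,7,8\}$, $W_3=\{9,10,11,12\}$, $K_1=\{5,6,9,10\}$, $K_2=\{1,2,9,11\}$, $K_3=\{1,3,5,7\}$. For $S\subseteq[12]$, $\mathcal{B}^*_S$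 is the sub-problem with receivers $u_1,u_2,u_3$, messages $\mathbf{x}_j$, $j\in S$, demand sets $W_i\cap S$ and side information sets $K_i\cap S$. $G^*$ is the directed graph on $[12]$ with a directed edge $(a,b)$ iff $b\in K_i$ where $a\in W_i$; $G^*_u$ is the undirected graph on $[12]$ with $\{a,b\}$ an edge iff both $(a,b)$ and $(b,a)$ are edges of $G^*$; $G^*_S$, $G^*_{S,u}$ are the subgraphs induced by $S$. $\mathsf{MAIS}(D)$ is the maximum number of vertices of an acyclic induced subgraph of a directed graph $D$; $\alpha$ and $\bar{\chi}$ are the independence number and clique cover number. *)

theory Defs
  imports Complex_Main "HOL-Library.FuncSet"
begin

definition Wd :: "nat \<Rightarrow> nat set" where
  "Wd i = (if i = 1 then {1,2,3,4} else if i = 2 then {5,6,7,8}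
           else if i = 3 then {9,10,11,12} else {})"

definition Kn :: "nat \<Rightarrow> nat set" where
  "Kn i = (if i = 1 then {5,6,9,10} else if i = 2 then {1,2,9,11}
           else if i = 3 then {1,3,5,7} else {})"

definition receivers :: "nat set" where
  "receivers = {1,2,3}"

definition Gstar :: "(nat \<times> nat) set" where
  "Gstar = {(a,b). \<exists>i\<in>receivers. a \<in> Wd i \<and> b \<in> Kn i}"

definition adjU :: "nat \<Rightarrow> nat \<Rightarrow> bool" where
  "adjU a b \<longleftrightarrow> (a,b) \<in> Gstar \<and> (b,a) \<in> Gstar"

definition MAIS :: "nat set \<Rightarrow> nat" where
  "MAIS S = Max {card T | T. T \<subseteq> S \<and> acyclic (Gstar \<inter> (T \<times> T))}"

definition alpha :: "nat set \<Rightarrow> nat" where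
  "alpha S = Max {card T | T. T \<subseteq> S \<and> (\<forall>a\<in>T. \<forall>b\<in>T. a \<noteq> b \<longrightarrow> \<not> adjU a b)}"

definition clique_cover :: "nat set \<Rightarrow> nat" where
  "clique_cover S = (LEAST k. \<exists>P. finite P \<and> card P = k
      \<and> (\<forall>C\<in>P. C \<noteq> {} \<and> (\<forall>a\<in>C. \<forall>b\<in>C. a \<noteq> b \<longrightarrow> adjU a b))
      \<and> pairwise disjnt P \<and> \<Union>P = S)"

text \<open>Message assignments: x j is the message vector x_j in A^m (coordinates 0..m-1),
  for j in S; everything else is undefined.\<close>
definition msgs :: "'a set \<Rightarrow> nat \<Rightarrow> nat set \<Rightarrow> (nat \<Rightarrow> nat \<Rightarrow> 'a) set" where
  "msgs A m S = {x. \<forall>j k. if j \<in> S \<and> k < m then x j k \<in> A else x j k = undefined}"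

text \<open>Encoder E maps messages to a codeword in A^l (positions 0..l-1); receiver i
  observes positions R i and must decode x_{W_i \<inter> S} from c_{R_i} and x_{K_i \<inter> S}.\<close>
definition valid_code ::
  "'a set \<Rightarrow> nat set \<Rightarrow> nat \<Rightarrow> nat \<Rightarrow> ((nat \<Rightarrow> nat \<Rightarrow> 'a) \<Rightarrow> nat \<Rightarrow> 'a) \<Rightarrow> (nat \<Rightarrow> nat set) \<Rightarrow> bool"
where
  "valid_code A S m l E R \<longleftrightarrow>
     (\<forall>x\<in>msgs A m S. \<forall>p<l. E x p \<in> A) \<and>
     (\<forall>i\<in>receivers. R i \<subseteq> {..<l} \<and>
        (\<exists>D. \<forall>x\<in>msgs A m S.
              D (restrict (E x) (R i)) (restrict x (Kn i \<inter> S)) = restrict x (Wd i \<inter> S)))"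

definition locality_le :: "real \<Rightarrow> nat set \<Rightarrow> nat \<Rightarrow> (nat \<Rightarrow> nat set) \<Rightarrow> bool" where
  "locality_le r S m R \<longleftrightarrow>
     (\<forall>i\<in>receivers. Wd i \<inter> S \<noteq> {} \<longrightarrow>
        real (card (R i)) \<le> r * real m * real (card (Wd i \<inter> S)))"

definition beta_star :: "'a set \<Rightarrow> nat set \<Rightarrow> real \<Rightarrow> real" where
  "beta_star A S r = Inf {real l / real m | l m E R.
       m \<ge> 1 \<and> valid_code A S m l E R \<and> locality_le r S m R}"

end

theory Submission
  imports Defs
begin

text \<open>
  The 2-cycles of G* are exactly the edges of G*_u, and its only other minimal cycles are the
  triangles 2 \<rightarrow> 10 \<rightarrow> 7 \<rightarrow> 2 and 3 \<rightarrow> 6 \<rightarrow> 11 \<rightarrow> 3. So a maximum independent set T of G*_{S,u}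
  that is not acyclic contains a triangle. If S were not independent, some vertex of S outside
  T would be adjacent to exactly one vertex of T, a vertex of that triangle, and exchanging the
  two would give an acyclic set of size \<alpha>, contradicting MAIS < \<alpha>. Hence S is independent:
  of any two receivers, one knows none of the messages the other demands.

  For a code of locality one, counting codewords over a fiber in which only the demands of
  receiver i vary shows that i reads exactly m |W_i \<inter> S| symbols, which are therefore a function
  of the messages i demands or knows. If i knows none of the messages demanded by j, a symbol
  read by both would stay constant while j's demands vary, which leaves too few values for j to
  decode. So the read sets are pairwise disjoint and \<ell> \<ge> m |S|; finally |S| bounds the clique
  cover number, witnessed by the cover with singletons.
\<close>

section \<open>Cycles of G* and of its independent sets\<close>

lemma Gstar_iff:
  "(a, b) \<in> Gstar \<longleftrightarrow>
     a \<in> {1,2,3,4} \<and> b \<in> {5,6,9,10} \<or> a \<in> {5,6,7,8} \<and> b \<in> {1,2,9,11} \<or>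
     a \<in> {9,10,11,12} \<and> b \<in> {1,3,5,7}"
  by (auto simp: Gstar_def receivers_def Wd_def Kn_def)

lemma adjU_sym: "adjU a b \<Longrightarrow> adjU b a"
  by (simp add: adjU_def)

lemma not_adjU_refl: "\<not> adjU a a"
  by (auto simp: adjU_def Gstar_iff)

definition independent_set :: "nat set \<Rightarrow> bool" where
  "independent_set T \<longleftrightarrow> (\<forall>a\<in>T. \<forall>b\<in>T. a \<noteq> b \<longrightarrow> \<not> adjU a b)"

lemma independent_set_insert:
  "independent_set (insert a T) \<longleftrightarrow> independent_set T \<and> (\<forall>b\<in>T. a \<noteq> b \<longrightarrow> \<not> adjU a b)"
  by (auto simp: independent_set_def dest: adjU_sym)

lemma atLeastAtMost_1_12_iff: "v \<in> {1..12::nat} \<longleftrightarrow> v \<in> {1,2,3,4,5,6,7,8,9,10,11,12}"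
  by simp presburger

definition triangles :: "nat set set" where
  "triangles = {{2,7,10}, {3,6,11}}"

lemma one_way_edge_cases:
  assumes "(u, v) \<in> Gstar" and "(v, u) \<notin> Gstar"
  shows "u \<notin> {1,5,9} \<and> v \<notin> {4,8,12} \<and>
    (u \<in> {4,8,12} \<or> v \<in> {1,5,9} \<or> (u, v) \<in> {(2,10),(10,7),(7,2),(3,6),(6,11),(11,3)})"
  using assms unfolding Gstar_iff by auto

lemma acyclic_if_independent_triangle_free:
  assumes T: "independent_set T" and no_triangle: "\<forall>D\<in>triangles. \<not> D \<subseteq> T"
  shows "acyclic (Restr Gstar T)"
proof -
  obtain a b where a: "a \<in> {2,7,10::nat}" "a \<notin> T" and b: "b \<in> {3,6,11::nat}" "b \<notin> T"
  proof -
    have "\<not> {2,7,10} \<subseteq> T" "\<not> {3,6,11} \<subseteq> T"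
      using no_triangle by (simp_all add: triangles_def)
    then show ?thesis using that by blast
  qed
  define next_on_triangle :: "nat \<Rightarrow> nat" where
    "next_on_triangle v = (if v = 2 then 10 else if v = 10 then 7 else if v = 7 then 2
       else if v = 3 then 6 else if v = 6 then 11 else if v = 11 then 3 else v)" for v
  \<comment> \<open>Each triangle is cut open at its missing vertex and ranked from there on.\<close>
  define f :: "nat \<Rightarrow> nat" where
    "f v = (if v \<in> {4,8,12} then 3 else if v \<in> {1,5,9} then 0
       else if v \<in> {next_on_triangle a, next_on_triangle b} then 2 else 1)" for v
  show ?thesis
  proof (rule acyclicI_order[where f = f])
    fix u v assume "(u, v) \<in> Restr Gstar T"
    then have uv: "(u, v) \<in> Gstar" "u \<in> T" "v \<in> T" by auto
    then have "u \<noteq> v" by (auto simp: Gstar_iff)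
    then have vu: "(v, u) \<notin> Gstar" using T uv by (auto simp: independent_set_def adjU_def)
    have "f u = 3 \<and> f v < 3 \<or> f u > 0 \<and> f v = 0 \<or>
        (u, v) \<in> {(2,10),(10,7),(7,2),(3,6),(6,11),(11,3)}"
      using one_way_edge_cases[OF uv(1) vu] unfolding f_def by (elim conjE disjE) simp_all
    moreover have "f v < f u" if "(u, v) \<in> {(2,10),(10,7),(7,2),(3,6),(6,11),(11,3)}"
      using that a b uv(2,3) unfolding insert_iff singleton_iff prod.inject empty_iff
      by (elim disjE conjE) (simp_all add: f_def next_on_triangle_def)
    ultimately show "f v < f u" by auto
  qed
qed

definition non_neighbours :: "nat set \<Rightarrow> nat set" where
  "non_neighbours D = {v \<in> {1..12}. \<forall>d\<in>D. \<not> adjU v d}"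

lemma non_neighbours_triangles:
  "non_neighbours {2,7,10} = {2,4,7,8,10,12}"
  "non_neighbours {3,6,11} = {3,4,6,8,11,12}"
  by (rule set_eqI, unfold non_neighbours_def mem_Collect_eq atLeastAtMost_1_12_iff,
      auto simp: adjU_def Gstar_iff)+

lemma independent_non_neighbours_triangle:
  "D \<in> triangles \<Longrightarrow> independent_set (non_neighbours D)"
  unfolding triangles_def
  by (elim insertE emptyE)
    (simp_all add: non_neighbours_triangles independent_set_insert independent_set_def
      adjU_def Gstar_iff)

lemma unique_neighbour_in_non_neighbours_triangle:
  assumes "D \<in> triangles" and s: "s \<in> {1..12} - non_neighbours D"
  shows "\<exists>d\<in>D. adjU s d \<and> (\<forall>u\<in>non_neighbours D. adjU s u \<longrightarrow> u = d)"
proof -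
  from assms(1) consider "D = {2,7,10}" | "D = {3,6,11}" unfolding triangles_def by blast
  then show ?thesis
  proof cases
    case 1
    then have "s \<in> {1,3,5,6,9,11}" using s by (simp add: non_neighbours_triangles) presburger
    then show ?thesis
      unfolding 1 by (elim insertE emptyE; simp add: non_neighbours_triangles adjU_def Gstar_iff)
  next
    case 2
    then have "s \<in> {1,2,5,7,9,10}" using s by (simp add: non_neighbours_triangles) presburger
    then show ?thesis
      unfolding 2 by (elim insertE emptyE; simp add: non_neighbours_triangles adjU_def Gstar_iff)
  qed
qed

lemma triangle_disjoint_non_neighbours_other:
  "D \<in> triangles \<Longrightarrow> D' \<in> triangles \<Longrightarrow> D' \<noteq> D \<Longrightarrow> D' \<inter> non_neighbours D = {}"
  unfolding triangles_def by (elim insertE emptyE) (simp_all add: non_neighbours_triangles)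

lemma independent_subset_non_neighbours:
  assumes "independent_set T" "T \<subseteq> {1..12}" "D \<subseteq> T"
  shows "T \<subseteq> non_neighbours D"
proof
  fix v assume "v \<in> T"
  then have "\<not> adjU v d" if "d \<in> D" for d
    using assms that not_adjU_refl[of v] unfolding independent_set_def by (metis subsetD)
  then show "v \<in> non_neighbours D" using \<open>v \<in> T\<close> assms(2) unfolding non_neighbours_def by blast
qed

lemma exchange_at_triangle:
  assumes T: "independent_set T" "T \<subseteq> S" and S: "S \<subseteq> {1..12}" "\<not> independent_set S"
    and D: "D \<in> triangles" "D \<subseteq> T"
  obtains s d where "s \<in> S - T" "d \<in> T"
    "independent_set (insert s (T - {d}))" "\<forall>D'\<in>triangles. \<not> D' \<subseteq> insert s (T - {d})"
proof -
  define N where "N = non_neighbours D"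
  have TN: "T \<subseteq> N"
    unfolding N_def by (rule independent_subset_non_neighbours) (use T S D in auto)
  obtain s where s: "s \<in> S" "s \<notin> N"
    using independent_non_neighbours_triangle[OF D(1)] S(2) unfolding N_def independent_set_def
    by blast
  obtain d where d: "d \<in> D" and unique: "\<forall>u\<in>N. adjU s u \<longrightarrow> u = d"
    using unique_neighbour_in_non_neighbours_triangle[OF D(1), of s] s S(1) unfolding N_def
    by blast
  have "\<not> adjU s u" if "u \<in> T - {d}" for u using that TN unique by blast
  then have "independent_set (insert s (T - {d}))"
    using T(1) unfolding independent_set_def by (metis adjU_sym insert_iff Diff_iff)
  moreover have "\<not> D' \<subseteq> insert s (T - {d})" if D': "D' \<in> triangles" for D'
  proof (cases "D' = D")
    case True
    then show ?thesis using d s(2) D(2) TN by auto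
  next
    case False
    then have "D' \<inter> N = {}" using triangle_disjoint_non_neighbours_other[OF D(1) D'] N_def by simp
    moreover have "\<not> D' \<subseteq> {s}"
      using D' unfolding triangles_def by (elim insertE emptyE) simp_all
    ultimately show ?thesis using TN by blast
  qed
  moreover have "s \<in> S - T" "d \<in> T" using s d D(2) TN by auto
  ultimately show ?thesis using that by blast
qed

lemma exchange_into_acyclic:
  assumes T: "independent_set T" "T \<subseteq> S" and S: "S \<subseteq> {1..12}" "\<not> independent_set S"
  shows "\<exists>T'\<subseteq>S. card T' = card T \<and> acyclic (Restr Gstar T')"
proof (cases "\<forall>D\<in>triangles. \<not> D \<subseteq> T")
  case True
  then show ?thesis using acyclic_if_independent_triangle_free[OF T(1)] T(2) by blast
next
  case False
  then obtain D where "D \<in> triangles" "D \<subseteq> T" by blast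
  then obtain s d where sd: "s \<in> S - T" "d \<in> T"
    and T': "independent_set (insert s (T - {d}))" "\<forall>D'\<in>triangles. \<not> D' \<subseteq> insert s (T - {d})"
    using exchange_at_triangle[OF T S] by blast
  have "finite T" using finite_subset[OF S(1)] finite_subset[OF T(2)] by simp
  then have "card (insert s (T - {d})) = card T"
    using sd by (metis DiffD2 card.insert card_Suc_Diff1 finite_Diff Diff_iff)
  moreover have "insert s (T - {d}) \<subseteq> S" using T(2) sd(1) by blast
  ultimately show ?thesis using acyclic_if_independent_triangle_free[OF T'] by blast
qed

lemma finite_card_subsets: "finite S \<Longrightarrow> finite {card T | T. T \<subseteq> S \<and> P T}"
  by (rule finite_subset[of _ "card ` Pow S"]) auto

lemma card_le_MAIS:
  assumes "finite S" "T \<subseteq> S" "acyclic (Restr Gstar T)"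
  shows "card T \<le> MAIS S"
  unfolding MAIS_def using assms by (intro Max_ge finite_card_subsets) blast+

lemma alpha_attained:
  assumes "finite S"
  obtains T where "T \<subseteq> S" "independent_set T" "card T = alpha S"
proof -
  let ?cards = "{card T | T. T \<subseteq> S \<and> independent_set T}"
  have "card {} \<in> ?cards" by (intro CollectI exI[of _ "{}"]) (simp add: independent_set_def)
  then have "Max ?cards \<in> ?cards" by (intro Max_in finite_card_subsets assms) auto
  moreover have "alpha S = Max ?cards" by (simp add: alpha_def independent_set_def)
  ultimately show ?thesis using that by auto
qed

lemma independent_if_MAIS_less_alpha:
  assumes S: "S \<subseteq> {1..12}" and less: "MAIS S < alpha S"
  shows "independent_set S"
proof (rule ccontr)
  assume dependent: "\<not> independent_set S"
  have "finite S" using finite_subset[OF S] by simp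
  then obtain T where "T \<subseteq> S" "independent_set T" "card T = alpha S" by (rule alpha_attained)
  then obtain T' where "T' \<subseteq> S" "card T' = alpha S" "acyclic (Restr Gstar T')"
    using exchange_into_acyclic[OF _ _ S dependent] by metis
  then have "alpha S \<le> MAIS S" using card_le_MAIS[OF \<open>finite S\<close>] by metis
  then show False using less by simp
qed

section \<open>Counting arguments for index codes of locality one\<close>

lemma card_image_factor_le:
  assumes "finite G" "g ` X \<subseteq> G" "\<And>x. x \<in> X \<Longrightarrow> h x = D (g x)"
  shows "card (h ` X) \<le> card G"
proof -
  have "h ` X = D ` g ` X" using assms(3) by (auto simp: image_image)
  also have "card \<dots> \<le> card (g ` X)" using assms(1,2) finite_subset by (blast intro: card_image_le)
  also have "\<dots> \<le> card G" using assms(1,2) by (rule card_mono)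
  finally show ?thesis .
qed

lemma factor_eq_if_card_le:
  assumes "finite G" "g ` X \<subseteq> G" "\<And>x. x \<in> X \<Longrightarrow> h x = D (g x)"
    and "card G \<le> card (h ` X)" and "x \<in> X" "y \<in> X" "h x = h y"
  shows "g x = g y"
proof -
  have fin: "finite (g ` X)" using assms(1,2) finite_subset by blast
  have hX: "h ` X = D ` g ` X" using assms(3) by (auto simp: image_image)
  have "card (g ` X) \<le> card (D ` g ` X)"
    using card_mono[OF assms(1,2)] assms(4) hX by simp
  then have "inj_on D (g ` X)" using fin by (simp add: card_image_le eq_card_imp_inj_on le_antisym)
  then show ?thesis using assms(3,5-7) by (auto dest: inj_onD)
qed

lemma Kn_Wd_disjoint: "i \<in> receivers \<Longrightarrow> Kn i \<inter> Wd i = {}"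
  by (auto simp: receivers_def Kn_def Wd_def)

lemma Wd_disjoint: "i \<noteq> j \<Longrightarrow> Wd i \<inter> Wd j = {}"
  by (auto simp: Wd_def)

lemma Union_Wd: "(\<Union>i\<in>receivers. Wd i) = {1..12}"
  by (rule set_eqI) (simp add: receivers_def Wd_def, presburger)

lemma msgs_nonempty:
  assumes "A \<noteq> {}"
  obtains x0 where "x0 \<in> msgs A m S"
proof -
  obtain a where "a \<in> A" using assms by blast
  then have "(\<lambda>j k. if j \<in> S \<and> k < m then a else undefined) \<in> msgs A m S"
    unfolding msgs_def by simp
  then show ?thesis by (rule that)
qed

lemma msgs_block:
  assumes "x \<in> msgs A m S" and "j \<in> S"
  shows "x j \<in> PiE {..<m} (\<lambda>_. A)"
proof -
  have x: "if j \<in> S \<and> k < m then x j k \<in> A else x j k = undefined" for k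
    using assms(1) unfolding msgs_def by blast
  have "x j k \<in> A" if "k < m" for k using x[of k] that assms(2) by simp
  moreover have "x j k = undefined" if "\<not> k < m" for k using x[of k] that by simp
  ultimately show ?thesis by (auto simp: PiE_iff extensional_def)
qed

lemma finite_observed: "valid_code A S m l E R \<Longrightarrow> i \<in> receivers \<Longrightarrow> finite (R i)"
  unfolding valid_code_def by (meson finite_lessThan finite_subset)

lemma observed_in_PiE:
  assumes "valid_code A S m l E R" "i \<in> receivers" "x \<in> msgs A m S"
  shows "restrict (E x) (R i) \<in> PiE (R i) (\<lambda>_. A)"
  using assms unfolding valid_code_def restrict_PiE_iff by (meson lessThan_iff subsetD)

definition fiber :: "'a set \<Rightarrow> nat \<Rightarrow> nat set \<Rightarrow> nat set \<Rightarrow> (nat \<Rightarrow> nat \<Rightarrow> 'a) \<Rightarrow>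
    (nat \<Rightarrow> nat \<Rightarrow> 'a) set" where
  "fiber A m S U x0 = {x \<in> msgs A m S. \<forall>v\<in>U. x v = x0 v}"

lemma restrict_fiber:
  assumes x0: "x0 \<in> msgs A m S" and W: "W \<subseteq> S" "U \<inter> W = {}"
  shows "(\<lambda>x. restrict x W) ` fiber A m S U x0 = PiE W (\<lambda>_. PiE {..<m} (\<lambda>_. A))"
proof
  show "(\<lambda>x. restrict x W) ` fiber A m S U x0 \<subseteq> PiE W (\<lambda>_. PiE {..<m} (\<lambda>_. A))"
    using W(1) msgs_block by (fastforce simp: fiber_def)
next
  show "PiE W (\<lambda>_. PiE {..<m} (\<lambda>_. A)) \<subseteq> (\<lambda>x. restrict x W) ` fiber A m S U x0"
  proof
    fix w assume w: "w \<in> PiE W (\<lambda>_. PiE {..<m} (\<lambda>_. A))"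
    define z where "z j = (if j \<in> W then w j else x0 j)" for j
    have "if j \<in> S \<and> k < m then z j k \<in> A else z j k = undefined" for j k
    proof (cases "j \<in> W")
      case True
      then have "w j \<in> PiE {..<m} (\<lambda>_. A)" "j \<in> S" using w W(1) by auto
      then show ?thesis using True unfolding z_def by (auto simp: PiE_iff extensional_def)
    next
      case False
      then show ?thesis using x0 unfolding z_def msgs_def by simp
    qed
    then have "z \<in> msgs A m S" unfolding msgs_def by blast
    moreover have "\<forall>v\<in>U. z v = x0 v" using W(2) unfolding z_def by auto
    moreover have "restrict z W = w" using w unfolding z_def by (auto simp: PiE_iff extensional_def)
    ultimately show "w \<in> (\<lambda>x. restrict x W) ` fiber A m S U x0"
      unfolding fiber_def by force
  qed
qed

lemma card_restrict_fiber:
  assumes "x0 \<in> msgs A m S" "W \<subseteq> S" "U \<inter> W = {}" "finite W"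
  shows "card ((\<lambda>x. restrict x W) ` fiber A m S U x0) = card A ^ (m * card W)"
  using assms by (simp add: restrict_fiber card_PiE power_mult mult.commute)

lemma decoder_on_fiber:
  assumes "valid_code A S m l E R" "i \<in> receivers" "Kn i \<inter> S \<subseteq> U"
  obtains D where "\<And>x. x \<in> fiber A m S U x0 \<Longrightarrow> restrict x (Wd i \<inter> S) = D (restrict (E x) (R i))"
proof -
  obtain D where D: "\<And>x. x \<in> msgs A m S \<Longrightarrow>
      D (restrict (E x) (R i)) (restrict x (Kn i \<inter> S)) = restrict x (Wd i \<inter> S)"
    using assms(1,2) unfolding valid_code_def by blast
  show ?thesis
  proof (rule that)
    fix x assume x: "x \<in> fiber A m S U x0"
    then have "restrict x (Kn i \<inter> S) = restrict x0 (Kn i \<inter> S)"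
      using assms(3) unfolding fiber_def by (auto intro: restrict_ext)
    then show "restrict x (Wd i \<inter> S) = D (restrict (E x) (R i)) (restrict x0 (Kn i \<inter> S))"
      using D x unfolding fiber_def by (metis (no_types, lifting) mem_Collect_eq)
  qed
qed

lemma demand_card_le_observed:
  assumes V: "valid_code A S m l E R" and i: "i \<in> receivers" and x0: "x0 \<in> msgs A m S"
    and U: "Kn i \<inter> S \<subseteq> U" "U \<inter> Wd i = {}"
    and G: "finite G" "(\<lambda>x. restrict (E x) (R i)) ` fiber A m S U x0 \<subseteq> G"
  shows "card A ^ (m * card (Wd i \<inter> S)) \<le> card G"
proof -
  obtain D where "\<And>x. x \<in> fiber A m S U x0 \<Longrightarrow> restrict x (Wd i \<inter> S) = D (restrict (E x) (R i))"
    using decoder_on_fiber[OF V i U(1)] by blast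
  then have "card ((\<lambda>x. restrict x (Wd i \<inter> S)) ` fiber A m S U x0) \<le> card G"
    using G by (rule card_image_factor_le[rotated 2])
  moreover have "U \<inter> (Wd i \<inter> S) = {}" using U(2) by blast
  ultimately show ?thesis using card_restrict_fiber[OF x0] by (simp add: Wd_def)
qed

lemma card_observed_ge:
  assumes "finite A" "card A \<ge> 2" and V: "valid_code A S m l E R" and i: "i \<in> receivers"
  shows "m * card (Wd i \<inter> S) \<le> card (R i)"
proof -
  have "A \<noteq> {}" using assms(2) by auto
  then obtain x0 where x0: "x0 \<in> msgs A m S" by (rule msgs_nonempty)
  have fin: "finite (R i)" using V i(1) by (rule finite_observed)
  have obs: "(\<lambda>x. restrict (E x) (R i)) ` fiber A m S (Kn i \<inter> S) x0 \<subseteq> PiE (R i) (\<lambda>_. A)"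
    using observed_in_PiE[OF V i] unfolding fiber_def by blast
  have "card A ^ (m * card (Wd i \<inter> S)) \<le> card (PiE (R i) (\<lambda>_. A))"
    by (rule demand_card_le_observed[OF V i x0 subset_refl _ _ obs])
      (use Kn_Wd_disjoint[OF i] fin assms(1) in \<open>auto simp: finite_PiE\<close>)
  then show ?thesis using assms(2) fin by (simp add: card_PiE power_le_imp_le_exp)
qed

lemma card_observed_le:
  assumes "locality_le 1 S m R" "i \<in> receivers" "Wd i \<inter> S \<noteq> {}"
  shows "card (R i) \<le> m * card (Wd i \<inter> S)"
  using assms unfolding locality_le_def by (metis mult_1 of_nat_le_iff of_nat_mult)

lemma observed_determined_by_demand_and_side_info:
  assumes A: "finite A" "card A \<ge> 2"
    and V: "valid_code A S m l E R" and L: "locality_le 1 S m R"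
    and i: "i \<in> receivers" "Wd i \<inter> S \<noteq> {}"
    and x: "x \<in> msgs A m S" and y: "y \<in> msgs A m S"
    and agree: "\<forall>v \<in> (Wd i \<union> Kn i) \<inter> S. x v = y v"
  shows "restrict (E x) (R i) = restrict (E y) (R i)"
proof -
  let ?X = "fiber A m S (Kn i \<inter> S) x"
  let ?G = "PiE (R i) (\<lambda>_. A)"
  obtain D where D: "\<And>z. z \<in> ?X \<Longrightarrow> restrict z (Wd i \<inter> S) = D (restrict (E z) (R i))"
    using decoder_on_fiber[OF V i(1) subset_refl] by blast
  have fin: "finite (R i)" using V i(1) by (rule finite_observed)
  have obs: "(\<lambda>z. restrict (E z) (R i)) ` ?X \<subseteq> ?G"
    using observed_in_PiE[OF V i(1)] unfolding fiber_def by blast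
  \<comment> \<open>With locality one the decoder is injective on the observed symbols.\<close>
  have "card ?G = card A ^ card (R i)" using fin by (simp add: card_PiE)
  also have "\<dots> \<le> card A ^ (m * card (Wd i \<inter> S))"
    using card_observed_le[OF L i] A(2) by (simp add: power_increasing)
  also have "\<dots> = card ((\<lambda>z. restrict z (Wd i \<inter> S)) ` ?X)"
    using Kn_Wd_disjoint[OF i(1)] by (intro card_restrict_fiber[OF x, symmetric]) (auto simp: Wd_def)
  finally have card_le: "card ?G \<le> card ((\<lambda>z. restrict z (Wd i \<inter> S)) ` ?X)" .
  have in_fiber: "x \<in> ?X" "y \<in> ?X" using x y agree by (auto simp: fiber_def)
  have same_demand: "restrict x (Wd i \<inter> S) = restrict y (Wd i \<inter> S)"
    using agree by (auto intro: restrict_ext)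
  have "finite ?G" using fin A(1) by (simp add: finite_PiE)
  show ?thesis
    by (rule factor_eq_if_card_le[where h = "\<lambda>z. restrict z (Wd i \<inter> S)",
          OF \<open>finite ?G\<close> obs D card_le in_fiber same_demand])
qed

lemma card_PiE_pinned:
  assumes "finite I" "p \<in> I"
  shows "card (PiE I (\<lambda>q. if q = p then {c} else A)) = card A ^ (card I - 1)"
proof -
  have "card (PiE I (\<lambda>q. if q = p then {c} else A)) =
      card {c} * (\<Prod>q\<in>I - {p}. card (if q = p then {c} else A))"
    using assms by (simp add: card_PiE prod.remove[OF assms])
  also have "(\<Prod>q\<in>I - {p}. card (if q = p then {c} else A)) = (\<Prod>q\<in>I - {p}. card A)"
    by (rule prod.cong) auto
  finally show ?thesis using assms by simp
qed

lemma observed_disjoint_if_no_side_info: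
  assumes A: "finite A" "card A \<ge> 2"
    and V: "valid_code A S m l E R" and L: "locality_le 1 S m R"
    and i: "i \<in> receivers" "Wd i \<inter> S \<noteq> {}" and j: "j \<in> receivers" "Wd j \<inter> S \<noteq> {}"
    and "i \<noteq> j" and no_side_info: "Wd j \<inter> Kn i \<inter> S = {}"
  shows "R i \<inter> R j = {}"
proof (rule ccontr)
  assume "R i \<inter> R j \<noteq> {}"
  then obtain p where p: "p \<in> R i" "p \<in> R j" by blast
  have "A \<noteq> {}" using A(2) by auto
  then obtain x0 where x0: "x0 \<in> msgs A m S" by (rule msgs_nonempty)
  let ?X = "fiber A m S (- Wd j) x0"
  let ?G = "PiE (R j) (\<lambda>q. if q = p then {E x0 p} else A)"
  have fin: "finite (R j)" using V j(1) by (rule finite_observed)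
  \<comment> \<open>Only the demands of receiver j vary on the fiber, and receiver i neither demands nor knows them.\<close>
  have "E x p = E x0 p" if "x \<in> ?X" for x
  proof -
    have "\<forall>v \<in> (Wd i \<union> Kn i) \<inter> S. x v = x0 v"
      using that Wd_disjoint[OF \<open>i \<noteq> j\<close>] no_side_info unfolding fiber_def by blast
    then have "restrict (E x) (R i) = restrict (E x0) (R i)"
      using that x0 unfolding fiber_def
      by (intro observed_determined_by_demand_and_side_info[OF A V L i]) auto
    then show ?thesis using p(1) by (metis restrict_apply')
  qed
  then have "(\<lambda>x. restrict (E x) (R j)) ` ?X \<subseteq> ?G"
    using observed_in_PiE[OF V j(1)] unfolding fiber_def by (auto simp: PiE_iff)
  then have "card A ^ (m * card (Wd j \<inter> S)) \<le> card ?G"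
    using Kn_Wd_disjoint[OF j(1)] fin A(1)
    by (intro demand_card_le_observed[OF V j(1) x0]) (auto simp: finite_PiE)
  also have "\<dots> = card A ^ (card (R j) - 1)" using fin p(2) by (rule card_PiE_pinned)
  also have "\<dots> < card A ^ card (R j)"
  proof (rule power_strict_increasing)
    have "card (R j) > 0" using fin p(2) card_gt_0_iff by blast
    then show "card (R j) - 1 < card (R j)" by simp
  qed (use A(2) in simp)
  also have "\<dots> \<le> card A ^ (m * card (Wd j \<inter> S))"
    using card_observed_le[OF L j] A(2) by (simp add: power_increasing)
  finally show False by simp
qed

lemma independent_no_side_info:
  assumes "independent_set S" "i \<in> receivers" "j \<in> receivers" "i \<noteq> j"
  shows "Wd j \<inter> Kn i \<inter> S = {} \<or> Wd i \<inter> Kn j \<inter> S = {}"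
proof (rule ccontr)
  assume "\<not> ?thesis"
  then obtain a b where a: "a \<in> Wd j" "a \<in> Kn i" "a \<in> S" and b: "b \<in> Wd i" "b \<in> Kn j" "b \<in> S"
    by blast
  have "adjU a b" using a b assms(2,3) unfolding adjU_def Gstar_def by blast
  moreover have "a \<noteq> b" using a(1) b(1) Wd_disjoint[OF assms(4)] by blast
  ultimately show False using assms(1) a(3) b(3) unfolding independent_set_def by blast
qed

lemma card_eq_sum_demands:
  assumes "S \<subseteq> {1..12}"
  shows "card S = (\<Sum>i\<in>receivers. card (Wd i \<inter> S))"
proof -
  have "S = (\<Union>i\<in>receivers. Wd i \<inter> S)"
    using assms Union_Wd by blast
  also have "card \<dots> = (\<Sum>i\<in>receivers. card (Wd i \<inter> S))"
    by (rule card_UN_disjoint) (auto simp: receivers_def Wd_def)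
  finally show ?thesis .
qed

lemma code_length_ge:
  assumes A: "finite A" "card A \<ge> 2" and S: "S \<subseteq> {1..12}" "independent_set S"
    and V: "valid_code A S m l E R" and L: "locality_le 1 S m R"
  shows "m * card S \<le> l"
proof -
  define I where "I = {i \<in> receivers. Wd i \<inter> S \<noteq> {}}"
  have I: "I \<subseteq> receivers" "finite I" unfolding I_def receivers_def by auto
  have disjoint: "R i \<inter> R j = {}" if "i \<in> I" "j \<in> I" "i \<noteq> j" for i j
    using independent_no_side_info[OF S(2), of i j] that
      observed_disjoint_if_no_side_info[OF A V L, of i j] observed_disjoint_if_no_side_info[OF A V L, of j i]
    unfolding I_def by blast
  have fin: "finite (R i)" if "i \<in> receivers" for i using V that by (rule finite_observed)
  have "m * card S = (\<Sum>i\<in>receivers. m * card (Wd i \<inter> S))"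
    using card_eq_sum_demands[OF S(1)] by (simp add: sum_distrib_left)
  also have "\<dots> = (\<Sum>i\<in>I. m * card (Wd i \<inter> S))"
    by (rule sum.mono_neutral_right) (auto simp: I_def receivers_def)
  also have "\<dots> \<le> (\<Sum>i\<in>I. card (R i))"
    using card_observed_ge[OF A V] I(1) by (intro sum_mono) blast
  also have "\<dots> = card (\<Union>i\<in>I. R i)"
    using I fin disjoint by (intro card_UN_disjoint[symmetric]) auto
  also have "\<dots> \<le> card {..<l}"
    using V I(1) unfolding valid_code_def by (intro card_mono) auto
  finally show ?thesis by simp
qed

section \<open>The broadcast rate\<close>

lemma uncoded_transmission:
  assumes "a \<in> A"
  shows "valid_code A S 1 13 (\<lambda>x p. if p \<in> S then x p 0 else a) (\<lambda>i. Wd i \<inter> S)"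
    and "locality_le 1 S 1 (\<lambda>i. Wd i \<inter> S)"
proof -
  let ?E = "\<lambda>x p. if p \<in> S then x p 0 else a"
  have x: "if j \<in> S \<and> k < 1 then x j k \<in> A else x j k = undefined" if "x \<in> msgs A 1 S" for x j k
    using that unfolding msgs_def by blast
  have symbols: "?E x p \<in> A" if "x \<in> msgs A 1 S" for x p
    using x[OF that, of p 0] assms by simp
  have positions: "Wd i \<inter> S \<subseteq> {..<13}" for i by (auto simp: Wd_def)
  have "restrict (\<lambda>j k. if k = 0 then c j else undefined) (Wd i \<inter> S) = restrict x (Wd i \<inter> S)"
    if "x \<in> msgs A 1 S" "c = restrict (?E x) (Wd i \<inter> S)" for x c i
  proof (rule restrict_ext, rule ext)
    fix j k assume "j \<in> Wd i \<inter> S"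
    then show "(if k = 0 then c j else undefined) = x j k"
      using x[OF that(1), of j k] that(2) by simp
  qed
  then have decoding: "\<exists>D. \<forall>x\<in>msgs A 1 S.
      D (restrict (?E x) (Wd i \<inter> S)) (restrict x (Kn i \<inter> S)) = restrict x (Wd i \<inter> S)" for i
    by (intro exI[of _ "\<lambda>c _. restrict (\<lambda>j k. if k = 0 then c j else undefined) (Wd i \<inter> S)"]) blast
  show "valid_code A S 1 13 ?E (\<lambda>i. Wd i \<inter> S)"
    unfolding valid_code_def using symbols positions decoding by blast
  show "locality_le 1 S 1 (\<lambda>i. Wd i \<inter> S)"
    unfolding locality_le_def by simp
qed

lemma beta_star_ge:
  assumes "m0 \<ge> 1" "valid_code A S m0 l0 E0 R0" "locality_le r S m0 R0"
    and "\<And>l m E R. m \<ge> 1 \<Longrightarrow> valid_code A S m l E R \<Longrightarrow> locality_le r S m R \<Longrightarrow> c * m \<le> l"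
  shows "real c \<le> beta_star A S r"
  unfolding beta_star_def
proof (rule cInf_greatest)
  show "{real l / real m | l m E R. m \<ge> 1 \<and> valid_code A S m l E R \<and> locality_le r S m R} \<noteq> {}"
    using assms(1-3) by blast
next
  fix v assume "v \<in> {real l / real m | l m E R. m \<ge> 1 \<and> valid_code A S m l E R \<and> locality_le r S m R}"
  then obtain l m E R where v: "v = real l / real m"
    and code: "m \<ge> 1" "valid_code A S m l E R" "locality_le r S m R"
    by blast
  from code have "c * m \<le> l" by (rule assms(4))
  then have "real c * real m \<le> real l" by (metis of_nat_le_iff of_nat_mult)
  then show "real c \<le> v" unfolding v using \<open>m \<ge> 1\<close> by (simp add: pos_le_divide_eq)
qed

lemma clique_cover_le_card:
  assumes "finite S"
  shows "clique_cover S \<le> card S"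
proof -
  let ?P = "(\<lambda>a. {a}) ` S"
  have "finite ?P \<and> card ?P = card S \<and> (\<forall>C\<in>?P. C \<noteq> {} \<and> (\<forall>a\<in>C. \<forall>b\<in>C. a \<noteq> b \<longrightarrow> adjU a b))
      \<and> pairwise disjnt ?P \<and> \<Union>?P = S"
    using assms by (auto simp: card_image pairwise_def disjnt_def)
  then show ?thesis unfolding clique_cover_def by (intro Least_le exI[of _ ?P])
qed

theorem lemma6:
  fixes A :: "'a set" and S :: "nat set"
  assumes "finite A" and "card A \<ge> 2"
    and "S \<subseteq> {1..12}"
    and "MAIS S < alpha S"
  shows "beta_star A S 1 \<ge> real (clique_cover S)"
proof -
  have independent: "independent_set S" using independent_if_MAIS_less_alpha assms(3,4) .
  have "A \<noteq> {}" using assms(2) by auto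
  then obtain a where "a \<in> A" by blast
  have "real (card S) \<le> beta_star A S 1"
  proof (rule beta_star_ge[OF _ uncoded_transmission[OF \<open>a \<in> A\<close>]])
    fix l m E R assume "valid_code A S m l E R" "locality_le 1 S m R"
    then show "card S * m \<le> l"
      using code_length_ge[OF assms(1-3) independent] by (simp add: mult.commute)
  qed simp
  moreover have "clique_cover S \<le> card S"
    using finite_subset[OF assms(3)] by (intro clique_cover_le_card) simp
  ultimately show ?thesis by simp
qed

end
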